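(* Let $S\subset\mathcal P$ be finite and let $\Delta$ be a bounded region of $\mathcal L_S$ with $n$ sides, with $P_k$ and $D_k$ ($k\in\mathbb{Z}/n\mathbb{Z}$) as in the context. If $D_k=D_{k+1}$, then $\overleftrightarrow{P_kP_{k+1}}\cap S=\overline{P_kP_{k+1}}\cap S$ (the full line through $P_k,P_{k+1}$ meets $S$ only within the closed segment between them). If $D_k\neq D_{k+1}$, then $\overline{P_kP_{k+1}}\cap S=\{P_k,P_{k+1}\}$.
   Context: $\mathcal P=\mathbb{R}^2\setminus\{(0,0)\}$; for $P=(A,B)\in\mathcal P$, $L_P$ is the line $Ax+By=1$ in $\mathbb{R}^2$; $\mathcal L_S=\{L_P\mid P\in S\}$; $O$ is the origin. For finite $S$, the regions of $\mathcal L_S$ are the closures of the connected components of $\mathbb{R}^2\setminus\bigcup_{P\in S}L_P$. For a bounded region $\Delta$ with $n$ sides, $L_k$ ($k\in\mathbb{Z}/n\mathbb{Z}$) are the lines containing the sides of $\Delta$ in clockwise order around $\Delta$, $P_k\in S$ is the point with $L_{P_k}=L_k$, and $D_k\in\{l,r\}$ is the side (left or right) of $L_k$ on which $O$ lies for a traveller moving along the side of $\Delta$ on $L_k$ clockwise around $\Delta$ (with $\Delta$ on the traveller's right). $\overleftrightarrow{XY}$ denotes the line and $\overline{XY}$ the closed segment through $X,Y$. *)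

theory Defs
  imports "HOL-Analysis.Analysis"
begin

definition lineL :: "real \<times> real \<Rightarrow> (real \<times> real) set" where
  "lineL P = {z. fst P * fst z + snd P * snd z = 1}"

definition regions :: "(real \<times> real) set \<Rightarrow> (real \<times> real) set set" where
  "regions S = closure ` components (- (\<Union>P\<in>S. lineL P))"

text \<open>The lines of S containing a side of the region \<Delta> (i.e. meeting \<Delta> in more than one point).\<close>

definition side_points :: "(real \<times> real) set \<Rightarrow> (real \<times> real) set \<Rightarrow> (real \<times> real) set" where
  "side_points S \<Delta> = {P \<in> S. \<exists>x y. x \<noteq> y \<and> x \<in> \<Delta> \<inter> lineL P \<and> y \<in> \<Delta> \<inter> lineL P}"

text \<open>Cross product: cross d w > 0 iff w points to the left of direction d.\<close>

definition cross :: "real \<times> real \<Rightarrow> real \<times> real \<Rightarrow> real" where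
  "cross d w = fst d * snd w - snd d * fst w"

text \<open>d is a direction of travel along L_P with \<Delta> on the traveller's right.\<close>

definition traveller_dir :: "(real \<times> real) set \<Rightarrow> real \<times> real \<Rightarrow> real \<times> real \<Rightarrow> bool" where
  "traveller_dir \<Delta> P d \<longleftrightarrow> d \<noteq> 0 \<and> fst P * fst d + snd P * snd d = 0 \<and>
     (\<forall>p\<in>lineL P. \<forall>q\<in>\<Delta>. cross d (q - p) \<le> 0)"

datatype lr = Lft | Rgt

text \<open>D: the side (left/right) of L_P on which the origin lies for the traveller.\<close>

definition origin_side :: "(real \<times> real) set \<Rightarrow> real \<times> real \<Rightarrow> lr" where
  "origin_side \<Delta> P = (if \<exists>d. traveller_dir \<Delta> P d \<and> (\<forall>p\<in>lineL P. cross d (0 - p) > 0)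
                        then Lft else Rgt)"

text \<open>P_0,...,P_(n-1) enumerate the sides of \<Delta> in clockwise order: side k is followed
  (travelling with \<Delta> on the right) by side k+1 mod n, i.e. the vertex shared with side k+1
  is the endpoint of side k in the direction of travel.\<close>

definition clockwise_sides ::
  "(real \<times> real) set \<Rightarrow> (real \<times> real) set \<Rightarrow> nat \<Rightarrow> (nat \<Rightarrow> real \<times> real) \<Rightarrow> bool" where
  "clockwise_sides S \<Delta> n P \<longleftrightarrow>
     bij_betw P {..<n} (side_points S \<Delta>) \<and>
     (\<forall>k<n. \<exists>v d. v \<in> \<Delta> \<inter> lineL (P k) \<inter> lineL (P ((k + 1) mod n)) \<and>
        traveller_dir \<Delta> (P k) d \<and>
        (\<forall>q\<in>\<Delta> \<inter> lineL (P k). fst d * fst (q - v) + snd d * snd (q - v) \<le> 0))"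

end

theory Submission
  imports Defs
begin

text \<open>For c = (1 - t) a + t b the affine function c \<bullet> x - 1 is (1 - t) (a \<bullet> x - 1) + t (b \<bullet> x - 1).
  Take x1 on the side of \<Delta> on L_a and x2 on the side on L_b (both away from the common vertex),
  so that u1 = b \<bullet> x1 - 1 and u2 = a \<bullet> x2 - 1 are nonzero. If c \<in> S, then \<Delta> lies in one
  closed half-plane of L_c, so c \<bullet> x1 - 1 = t u1 and c \<bullet> x2 - 1 = (1 - t) u2 have the same sign:
  t (1 - t) u1 u2 \<ge> 0. The side D of L_a (resp. L_b) on which the origin lies is determined
  by the sign of u2 (resp. u1), so D_k = D_(k+1) forces t (1 - t) \<ge> 0, i.e. c lies in the
  segment, while D_k \<noteq> D_(k+1) forces t (1 - t) \<le> 0, i.e. c is an endpoint.\<close>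

lemma inner_real_pair: "fst x * fst y + snd x * snd y = x \<bullet> (y :: real \<times> real)"
  by (simp add: inner_prod_def)

lemma mem_lineL_iff: "z \<in> lineL P \<longleftrightarrow> P \<bullet> z = 1"
  by (simp add: lineL_def inner_real_pair)

lemma closure_connected_subset_halfspace:
  fixes C :: "'a::euclidean_space set"
  assumes "connected C" and "\<forall>x\<in>C. c \<bullet> x \<noteq> \<beta>"
  shows "closure C \<subseteq> {x. \<beta> \<le> c \<bullet> x} \<or> closure C \<subseteq> {x. c \<bullet> x \<le> \<beta>}"
proof -
  have "C \<subseteq> {x. \<beta> \<le> c \<bullet> x} \<or> C \<subseteq> {x. c \<bullet> x \<le> \<beta>}"
  proof (rule ccontr)
    assume "\<not> ?thesis"
    then obtain x y where "x \<in> C" "y \<in> C" "c \<bullet> x \<le> \<beta>" "\<beta> \<le> c \<bullet> y"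
      by (auto simp: subset_eq)
    then show False
      using connected_ivt_hyperplane[OF assms(1)] assms(2) by blast
  qed
  then show ?thesis
    using closure_minimal closed_halfspace_ge closed_halfspace_le by metis
qed

lemma region_subset_halfplane:
  assumes "\<Delta> \<in> regions S" and "c \<in> S"
  shows "\<Delta> \<subseteq> {x. 1 \<le> c \<bullet> x} \<or> \<Delta> \<subseteq> {x. c \<bullet> x \<le> 1}"
proof -
  obtain C where C: "C \<in> components (- (\<Union>P\<in>S. lineL P))" and \<Delta>: "\<Delta> = closure C"
    using assms(1) unfolding regions_def by blast
  have "\<forall>x\<in>C. c \<bullet> x \<noteq> 1"
    using in_components_subset[OF C] assms(2) by (auto simp: mem_lineL_iff)
  then show ?thesis
    unfolding \<Delta> by (rule closure_connected_subset_halfspace[OF in_components_connected[OF C]])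
qed

lemma cross_perp:
  assumes "a \<bullet> d = 0"
  shows "(a \<bullet> a) * cross d w = cross d a * (a \<bullet> w)"
proof -
  have "fst a * fst d + snd a * snd d = 0"
    using assms by (simp add: inner_real_pair)
  then show ?thesis
    by (simp add: cross_def inner_real_pair[symmetric]) algebra
qed

lemma origin_side_eq_Lft_iff:
  assumes "a \<noteq> 0"
  shows "origin_side \<Delta> a = Lft \<longleftrightarrow> \<Delta> \<subseteq> {x. 1 \<le> a \<bullet> x}"
proof
  assume "origin_side \<Delta> a = Lft"
  then obtain d where d: "traveller_dir \<Delta> a d" and origin: "\<forall>p\<in>lineL a. cross d (0 - p) > 0"
    unfolding origin_side_def by (metis lr.distinct(1))
  have perp: "a \<bullet> d = 0" and right: "\<forall>p\<in>lineL a. \<forall>q\<in>\<Delta>. cross d (q - p) \<le> 0"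
    using d by (simp_all add: traveller_dir_def inner_real_pair)
  have aa: "a \<bullet> a > 0" using assms by simp
  define p where "p = (1 / (a \<bullet> a)) *\<^sub>R a"
  have p: "p \<in> lineL a" using aa by (simp add: p_def mem_lineL_iff)
  then have "(a \<bullet> a) * cross d (0 - p) > 0" using origin aa by simp
  then have neg: "cross d a < 0"
    using p by (simp add: cross_perp[OF perp] mem_lineL_iff)
  show "\<Delta> \<subseteq> {x. 1 \<le> a \<bullet> x}"
  proof
    fix q assume "q \<in> \<Delta>"
    then have "(a \<bullet> a) * cross d (q - p) \<le> 0" using right p aa by (simp add: mult_nonneg_nonpos)
    then have "cross d a * (a \<bullet> q - 1) \<le> 0"
      using p by (simp add: cross_perp[OF perp] mem_lineL_iff inner_diff_right)
    then show "q \<in> {x. 1 \<le> a \<bullet> x}" using neg by (simp add: mult_le_0_iff)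
  qed
next
  assume half: "\<Delta> \<subseteq> {x. 1 \<le> a \<bullet> x}"
  define d where "d = (- snd a, fst a)"
  have cross_d: "cross d w = - (a \<bullet> w)" for w
    by (simp add: d_def cross_def inner_real_pair[symmetric])
  have "traveller_dir \<Delta> a d"
    unfolding traveller_dir_def
  proof (intro conjI ballI)
    show "d \<noteq> 0" using assms by (auto simp: d_def prod_eq_iff)
    show "fst a * fst d + snd a * snd d = 0" by (simp add: d_def)
    fix p q assume "p \<in> lineL a" "q \<in> \<Delta>"
    then show "cross d (q - p) \<le> 0"
      using half by (auto simp: cross_d mem_lineL_iff inner_diff_right)
  qed
  moreover have "\<forall>p\<in>lineL a. cross d (0 - p) > 0"
    by (simp add: cross_d mem_lineL_iff)
  ultimately show "origin_side \<Delta> a = Lft"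
    unfolding origin_side_def by (metis (no_types, lifting))
qed

lemma origin_side_eq_Lft_iff_point:
  assumes "\<Delta> \<in> regions S" and "a \<in> S" and "0 \<notin> S"
    and "x \<in> \<Delta>" and "a \<bullet> x \<noteq> 1"
  shows "origin_side \<Delta> a = Lft \<longleftrightarrow> 1 < a \<bullet> x"
proof -
  have "a \<noteq> 0" using assms(2,3) by auto
  then show ?thesis
    using region_subset_halfplane[OF assms(1,2)] assms(4,5)
    unfolding origin_side_eq_Lft_iff[OF \<open>a \<noteq> 0\<close>] subset_eq mem_Collect_eq by fastforce
qed

lemma lineL_secant:
  assumes "v \<in> lineL a" and "x \<in> lineL a"
  shows "x - v = cross v x *\<^sub>R (- snd a, fst a)"
proof -
  have "fst a * fst v + snd a * snd v = 1" "fst a * fst x + snd a * snd x = 1"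
    using assms by (simp_all add: mem_lineL_iff inner_real_pair)
  then show ?thesis
    by (simp add: cross_def prod_eq_iff) algebra
qed

lemma lineL_common_points_imp_eq:
  assumes "v \<in> lineL a" "x \<in> lineL a" "v \<in> lineL b" "x \<in> lineL b" and "x \<noteq> v"
  shows "a = b"
proof -
  have det: "cross v x \<noteq> 0"
    by (metis lineL_secant[OF assms(1,2)] assms(5) right_minus_eq scaleR_zero_left)
  have "(a - b) \<bullet> v = 0" "(a - b) \<bullet> x = 0"
    using assms(1-4) by (simp_all add: mem_lineL_iff inner_diff_left)
  then have "cross v x *\<^sub>R (a - b) = 0"
    by (simp add: cross_def prod_eq_iff inner_real_pair[symmetric]) algebra
  then show ?thesis using det by simp
qed

lemma region_affine_combination_sign:
  assumes "\<Delta> \<in> regions S" and "(1 - t) *\<^sub>R a + t *\<^sub>R b \<in> S"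
    and "x1 \<in> \<Delta>" "a \<bullet> x1 = 1" and "x2 \<in> \<Delta>" "b \<bullet> x2 = 1"
  shows "0 \<le> t * (1 - t) * ((b \<bullet> x1 - 1) * (a \<bullet> x2 - 1))"
proof -
  define c where "c = (1 - t) *\<^sub>R a + t *\<^sub>R b"
  have lin: "c \<bullet> x - 1 = (1 - t) * (a \<bullet> x - 1) + t * (b \<bullet> x - 1)" for x
    by (simp add: c_def algebra_simps)
  have "0 \<le> (c \<bullet> x1 - 1) * (c \<bullet> x2 - 1)"
    using region_subset_halfplane[OF assms(1,2)[folded c_def]] assms(3,5)
    by (force simp: subset_eq zero_le_mult_iff)
  also have "\<dots> = t * (1 - t) * ((b \<bullet> x1 - 1) * (a \<bullet> x2 - 1))"
    using assms(4,6) by (simp add: lin algebra_simps)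
  finally show ?thesis .
qed

lemma affine_hull_Int_eq_closed_segment_Int:
  fixes a b :: "'a::real_vector"
  assumes "\<And>t. (1 - t) *\<^sub>R a + t *\<^sub>R b \<in> S \<Longrightarrow> 0 \<le> t * (1 - t)"
  shows "affine hull {a, b} \<inter> S = closed_segment a b \<inter> S"
proof
  show "closed_segment a b \<inter> S \<subseteq> affine hull {a, b} \<inter> S"
    using segment_convex_hull convex_hull_subset_affine_hull by blast
  show "affine hull {a, b} \<inter> S \<subseteq> closed_segment a b \<inter> S"
  proof
    fix c assume c: "c \<in> affine hull {a, b} \<inter> S"
    then obtain s t where "c = s *\<^sub>R a + t *\<^sub>R b" "s + t = 1"
      unfolding affine_hull_2 by blast
    then have ct: "c = (1 - t) *\<^sub>R a + t *\<^sub>R b"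
      by (simp add: eq_diff_eq)
    then have "0 \<le> t * (1 - t)"
      using assms c by blast
    then have "0 \<le> t \<and> t \<le> 1"
      by (auto simp: zero_le_mult_iff)
    then show "c \<in> closed_segment a b \<inter> S"
      using c ct in_segment(1) by blast
  qed
qed

lemma closed_segment_Int_eq_endpoints:
  fixes a b :: "'a::real_vector"
  assumes "a \<in> S" "b \<in> S" and "\<And>t. (1 - t) *\<^sub>R a + t *\<^sub>R b \<in> S \<Longrightarrow> t * (1 - t) \<le> 0"
  shows "closed_segment a b \<inter> S = {a, b}"
proof
  show "closed_segment a b \<inter> S \<subseteq> {a, b}"
  proof
    fix c assume c: "c \<in> closed_segment a b \<inter> S"
    then obtain t where t: "0 \<le> t" "t \<le> 1" and ct: "c = (1 - t) *\<^sub>R a + t *\<^sub>R b"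
      using in_segment(1) by blast
    have "t * (1 - t) \<le> 0" using assms(3) c ct by blast
    then have "t = 0 \<or> t = 1"
      using t mult_pos_pos[of t "1 - t"] by linarith
    then show "c \<in> {a, b}" using ct by auto
  qed
qed (use assms(1,2) in auto)

lemma adjacent_sides:
  assumes "\<Delta> \<in> regions S" and "0 \<notin> S" and "a \<in> S" "b \<in> S" "a \<noteq> b"
    and "v \<in> lineL a" "v \<in> lineL b"
    and "x1 \<in> \<Delta>" "x1 \<in> lineL a" "x1 \<noteq> v" and "x2 \<in> \<Delta>" "x2 \<in> lineL b" "x2 \<noteq> v"
  shows "(origin_side \<Delta> a = origin_side \<Delta> b \<longrightarrow> affine hull {a, b} \<inter> S = closed_segment a b \<inter> S)
       \<and> (origin_side \<Delta> a \<noteq> origin_side \<Delta> b \<longrightarrow> closed_segment a b \<inter> S = {a, b})"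
proof -
  define u1 where "u1 = b \<bullet> x1 - 1"
  define u2 where "u2 = a \<bullet> x2 - 1"
  have "u1 \<noteq> 0"
  proof
    assume "u1 = 0"
    then have "x1 \<in> lineL b" by (simp add: u1_def mem_lineL_iff)
    then show False
      using lineL_common_points_imp_eq[OF assms(6,9,7)] assms(5,10) by blast
  qed
  have "u2 \<noteq> 0"
  proof
    assume "u2 = 0"
    then have "x2 \<in> lineL a" by (simp add: u2_def mem_lineL_iff)
    then show False
      using lineL_common_points_imp_eq[OF assms(6) _ assms(7,12)] assms(5,13) by blast
  qed
  have "origin_side \<Delta> a = Lft \<longleftrightarrow> 0 < u2"
    using origin_side_eq_Lft_iff_point[OF assms(1,3,2,11)] \<open>u2 \<noteq> 0\<close> by (simp add: u2_def)
  moreover have "origin_side \<Delta> b = Lft \<longleftrightarrow> 0 < u1"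
    using origin_side_eq_Lft_iff_point[OF assms(1,4,2,8)] \<open>u1 \<noteq> 0\<close> by (simp add: u1_def)
  ultimately have "origin_side \<Delta> a = origin_side \<Delta> b \<longleftrightarrow> (0 < u2 \<longleftrightarrow> 0 < u1)"
    by (cases "origin_side \<Delta> a"; cases "origin_side \<Delta> b") simp_all
  also have "\<dots> \<longleftrightarrow> 0 < u1 * u2"
    using \<open>u1 \<noteq> 0\<close> \<open>u2 \<noteq> 0\<close> by (auto simp: zero_less_mult_iff)
  finally have sides: "origin_side \<Delta> a = origin_side \<Delta> b \<longleftrightarrow> 0 < u1 * u2" .
  have sign: "0 \<le> t * (1 - t) * (u1 * u2)" if "(1 - t) *\<^sub>R a + t *\<^sub>R b \<in> S" for t
    using region_affine_combination_sign[OF assms(1) that assms(8) _ assms(11)] assms(9,12)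
    by (simp add: u1_def u2_def mem_lineL_iff)
  show ?thesis
  proof (intro conjI impI)
    assume "origin_side \<Delta> a = origin_side \<Delta> b"
    then show "affine hull {a, b} \<inter> S = closed_segment a b \<inter> S"
      using sign sides by (intro affine_hull_Int_eq_closed_segment_Int) (simp add: zero_le_mult_iff)
  next
    assume "origin_side \<Delta> a \<noteq> origin_side \<Delta> b"
    then have "u1 * u2 < 0" using sides \<open>u1 \<noteq> 0\<close> \<open>u2 \<noteq> 0\<close>
      by (metis linorder_neqE_linordered_idom mult_eq_0_iff)
    show "closed_segment a b \<inter> S = {a, b}"
    proof (rule closed_segment_Int_eq_endpoints[OF assms(3,4)])
      fix t assume "(1 - t) *\<^sub>R a + t *\<^sub>R b \<in> S"
      then have "0 \<le> t * (1 - t) * (u1 * u2)" by (rule sign)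
      then show "t * (1 - t) \<le> 0"
        using \<open>u1 * u2 < 0\<close> by (metis linorder_not_le mult_pos_neg)
    qed
  qed
qed

theorem lemma3p9:
  fixes S :: "(real \<times> real) set" and \<Delta> :: "(real \<times> real) set"
    and n :: nat and P :: "nat \<Rightarrow> real \<times> real"
  assumes "finite S" and "(0, 0) \<notin> S"
    and "\<Delta> \<in> regions S" and "bounded \<Delta>"
    and "n = card (side_points S \<Delta>)"
    and "clockwise_sides S \<Delta> n P"
    and "k < n"
  shows "(origin_side \<Delta> (P k) = origin_side \<Delta> (P ((k + 1) mod n)) \<longrightarrow>
            affine hull {P k, P ((k + 1) mod n)} \<inter> S = closed_segment (P k) (P ((k + 1) mod n)) \<inter> S)
       \<and> (origin_side \<Delta> (P k) \<noteq> origin_side \<Delta> (P ((k + 1) mod n)) \<longrightarrow>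
            closed_segment (P k) (P ((k + 1) mod n)) \<inter> S = {P k, P ((k + 1) mod n)})"
proof -
  define a b where "a = P k" and "b = P ((k + 1) mod n)"
  have "a \<in> side_points S \<Delta>" "b \<in> side_points S \<Delta>"
    using assms(6,7) unfolding clockwise_sides_def bij_betw_def a_def b_def by auto
  then have "a \<in> S" "b \<in> S"
    and sides: "\<exists>x y. x \<noteq> y \<and> x \<in> \<Delta> \<inter> lineL a \<and> y \<in> \<Delta> \<inter> lineL a"
      "\<exists>x y. x \<noteq> y \<and> x \<in> \<Delta> \<inter> lineL b \<and> y \<in> \<Delta> \<inter> lineL b"
    by (simp_all add: side_points_def)
  obtain v where "v \<in> lineL a" "v \<in> lineL b"
    using assms(6,7) unfolding clockwise_sides_def a_def b_def by blast
  moreover obtain x1 x2 where "x1 \<in> \<Delta>" "x1 \<in> lineL a" "x1 \<noteq> v" "x2 \<in> \<Delta>" "x2 \<in> lineL b" "x2 \<noteq> v"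
    using sides by (metis IntE)
  ultimately show ?thesis
    using adjacent_sides[OF assms(3) _ \<open>a \<in> S\<close> \<open>b \<in> S\<close>] assms(2)
    unfolding a_def[symmetric] b_def[symmetric] by (cases "a = b") (auto simp: zero_prod_def)
qed

end
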